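(* Let $S$ be a connected graded reduced affine monoid and $R$ a commutative ring with identity. Then $c_{\mathrm{gr}}(S)=\mu(\ker(\pi_R))$, where the polynomial ring $R[x_a\mid a\in\mathcal{A}(S)]$ is graded by $\deg x_a=|a|$, so that $\pi_R$ is a homomorphism of graded algebras.
   Context: A monoid is a commutative cancellative semigroup with identity; affine means a finitely generated submonoid of a finitely generated free abelian group; reduced means the identity is the only unit. $S$ is graded if $S=\bigsqcup_{d\in\mathbb{N}_0}S_d$ with $S_dS_e\subseteq S_{d+e}$; $|s|=d$ for $s\in S_d$; connected graded means $S_0=\{1\}$. $\mathcal{A}(S)$ is the finite set of atoms, $a^{\alpha}=\prod_a a^{\alpha(a)}$. $R[S]$ is the semigroup ring, graded by the grading of $S$, and $\pi_R:R[x_a\mid a\in\mathcal{A}(S)]\to R[S]$ is the $R$-algebra homomorphism $x^{\alpha}\mapsto a^{\alpha}$. For an ideal $I$ of the graded polynomial ring, $\mu(I)$ is the minimal non-negative integer $d$ such that $I$ is generated by elements of degree at most $d$. The graded catenary degree: set $|\alpha|_{\mathrm{gr}}=\sum_a\alpha(a)|a|$, $\gcd(\alpha,\gamma)(a)=\min\{\alpha(a),\gamma(a)\}$, $d_{\mathrm{gr}}(\alpha,\gamma)=\max\{|\alpha-\gcd(\alpha,\gamma)|_{\mathrm{gr}},|\gamma-\gcd(\alpha,\gamma)|_{\mathrm{gr}}\}$; $c_{\mathrm{gr}}(S)$ is the minimal $d$ such that whenever $a^{\alpha}=a^{\gamma}$ there is a sequence $\alpha=\alpha^{(0)},\dots,\alpha^{(k)}=\gamma$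 with $a^{\alpha^{(j)}}=a^{\alpha^{(j+1)}}$ and $d_{\mathrm{gr}}(\alpha^{(j)},\alpha^{(j+1)})\le d$ for all $j$. *)

theory Defs
  imports Main "HOL-Library.Poly_Mapping" "HOL-Library.Function_Algebras"
begin

text \<open>The ambient finitely generated free abelian group is Z^n, modelled as
  functions 'n => int for a finite index type 'n; the monoid operation of S
  is written additively (identity 0).\<close>

definition mon_closed :: "('n \<Rightarrow> int) set \<Rightarrow> bool" where
  "mon_closed S \<longleftrightarrow> 0 \<in> S \<and> (\<forall>x\<in>S. \<forall>y\<in>S. x + y \<in> S)"

definition affine_monoid :: "('n::finite \<Rightarrow> int) set \<Rightarrow> bool" where
  "affine_monoid S \<longleftrightarrow> mon_closed S \<and>
     (\<exists>G. finite G \<and> G \<subseteq> S \<and>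
        S = range (\<lambda>c :: ('n \<Rightarrow> int) \<Rightarrow> nat. \<Sum>g\<in>G. (\<lambda>i. int (c g) * g i)))"

definition units_of_mon :: "('n \<Rightarrow> int) set \<Rightarrow> ('n \<Rightarrow> int) set" where
  "units_of_mon S = {u \<in> S. \<exists>v\<in>S. u + v = 0}"

definition reduced_monoid :: "('n \<Rightarrow> int) set \<Rightarrow> bool" where
  "reduced_monoid S \<longleftrightarrow> units_of_mon S = {0}"

text \<open>A grading of S is given by the degree function deg (s is in S_d iff deg s = d).\<close>
definition graded_monoid :: "('n \<Rightarrow> int) set \<Rightarrow> (('n \<Rightarrow> int) \<Rightarrow> nat) \<Rightarrow> bool" where
  "graded_monoid S deg \<longleftrightarrow> (\<forall>x\<in>S. \<forall>y\<in>S. deg (x + y) = deg x + deg y)"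

definition connected_graded :: "('n \<Rightarrow> int) set \<Rightarrow> (('n \<Rightarrow> int) \<Rightarrow> nat) \<Rightarrow> bool" where
  "connected_graded S deg \<longleftrightarrow> graded_monoid S deg \<and> {s \<in> S. deg s = 0} = {0}"

definition atoms :: "('n \<Rightarrow> int) set \<Rightarrow> ('n \<Rightarrow> int) set" where
  "atoms S = {a \<in> S. a \<notin> units_of_mon S \<and>
      (\<forall>x\<in>S. \<forall>y\<in>S. a = x + y \<longrightarrow> x \<in> units_of_mon S \<or> y \<in> units_of_mon S)}"

definition is_fact :: "('n \<Rightarrow> int) set \<Rightarrow> (('n \<Rightarrow> int) \<Rightarrow>\<^sub>0 nat) \<Rightarrow> bool" where
  "is_fact S \<alpha> \<longleftrightarrow> Poly_Mapping.keys \<alpha> \<subseteq> atoms S"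

definition atom_pow :: "(('n \<Rightarrow> int) \<Rightarrow>\<^sub>0 nat) \<Rightarrow> ('n \<Rightarrow> int)" where
  "atom_pow \<alpha> = (\<Sum>a\<in>Poly_Mapping.keys \<alpha>. (\<lambda>i. int (Poly_Mapping.lookup \<alpha> a) * a i))"

definition gr_len :: "(('n \<Rightarrow> int) \<Rightarrow> nat) \<Rightarrow> (('n \<Rightarrow> int) \<Rightarrow>\<^sub>0 nat) \<Rightarrow> nat" where
  "gr_len deg \<alpha> = (\<Sum>a\<in>Poly_Mapping.keys \<alpha>. Poly_Mapping.lookup \<alpha> a * deg a)"

text \<open>|alpha - gcd(alpha,gamma)|_gr, written out.\<close>
definition gr_len_diff :: "(('n \<Rightarrow> int) \<Rightarrow> nat) \<Rightarrow> (('n \<Rightarrow> int) \<Rightarrow>\<^sub>0 nat) \<Rightarrow> (('n \<Rightarrow> int) \<Rightarrow>\<^sub>0 nat) \<Rightarrow> nat" where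
  "gr_len_diff deg \<alpha> \<gamma> = (\<Sum>a\<in>Poly_Mapping.keys \<alpha>. (Poly_Mapping.lookup \<alpha> a - min (Poly_Mapping.lookup \<alpha> a) (Poly_Mapping.lookup \<gamma> a)) * deg a)"

definition d_gr :: "(('n \<Rightarrow> int) \<Rightarrow> nat) \<Rightarrow> (('n \<Rightarrow> int) \<Rightarrow>\<^sub>0 nat) \<Rightarrow> (('n \<Rightarrow> int) \<Rightarrow>\<^sub>0 nat) \<Rightarrow> nat" where
  "d_gr deg \<alpha> \<gamma> = max (gr_len_diff deg \<alpha> \<gamma>) (gr_len_diff deg \<gamma> \<alpha>)"

definition cgr_bound :: "('n \<Rightarrow> int) set \<Rightarrow> (('n \<Rightarrow> int) \<Rightarrow> nat) \<Rightarrow> nat \<Rightarrow> bool" where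
  "cgr_bound S deg d \<longleftrightarrow>
     (\<forall>\<alpha> \<gamma>. is_fact S \<alpha> \<and> is_fact S \<gamma> \<and> atom_pow \<alpha> = atom_pow \<gamma> \<longrightarrow>
        (\<exists>cs. cs \<noteq> [] \<and> hd cs = \<alpha> \<and> last cs = \<gamma> \<and> (\<forall>\<beta>\<in>set cs. is_fact S \<beta>) \<and>
           (\<forall>j. Suc j < length cs \<longrightarrow>
              atom_pow (cs ! j) = atom_pow (cs ! Suc j) \<and> d_gr deg (cs ! j) (cs ! Suc j) \<le> d)))"

definition c_gr :: "('n \<Rightarrow> int) set \<Rightarrow> (('n \<Rightarrow> int) \<Rightarrow> nat) \<Rightarrow> nat" where
  "c_gr S deg = (LEAST d. cgr_bound S deg d)"

text \<open>The polynomial ring R[x_a | a in A(S)]: polynomials are finitely supported maps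
  from exponent vectors to coefficients (Poly_Mapping convolution product), with
  all variables among the atoms.\<close>
type_synonym ('n, 'r) mpoly = "((('n \<Rightarrow> int) \<Rightarrow>\<^sub>0 nat) \<Rightarrow>\<^sub>0 'r)"

definition poly_ring :: "('n \<Rightarrow> int) set \<Rightarrow> ('n, 'r::comm_ring_1) mpoly set" where
  "poly_ring S = {p. \<forall>\<alpha>\<in>Poly_Mapping.keys p. is_fact S \<alpha>}"

text \<open>The semigroup ring R[S] as finitely supported maps S -> R; pi_R.\<close>
definition pi_R :: "('n, 'r::comm_ring_1) mpoly \<Rightarrow> (('n \<Rightarrow> int) \<Rightarrow>\<^sub>0 'r)" where
  "pi_R p = (\<Sum>\<alpha>\<in>Poly_Mapping.keys p. Poly_Mapping.single (atom_pow \<alpha>) (Poly_Mapping.lookup p \<alpha>))"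

definition ker_pi :: "('n \<Rightarrow> int) set \<Rightarrow> ('n, 'r::comm_ring_1) mpoly set" where
  "ker_pi S = {p \<in> poly_ring S. pi_R p = 0}"

definition homogeneous :: "(('n \<Rightarrow> int) \<Rightarrow> nat) \<Rightarrow> nat \<Rightarrow> ('n, 'r::comm_ring_1) mpoly \<Rightarrow> bool" where
  "homogeneous deg e p \<longleftrightarrow> (\<forall>\<alpha>\<in>Poly_Mapping.keys p. gr_len deg \<alpha> = e)"

definition ideal_gen :: "('n \<Rightarrow> int) set \<Rightarrow> ('n, 'r::comm_ring_1) mpoly set \<Rightarrow> ('n, 'r) mpoly set" where
  "ideal_gen S G = {\<Sum>g\<in>H. c g * g | H c. finite H \<and> H \<subseteq> G \<and> (\<forall>g\<in>H. c g \<in> poly_ring S)}"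

definition mu :: "('n \<Rightarrow> int) set \<Rightarrow> (('n \<Rightarrow> int) \<Rightarrow> nat) \<Rightarrow> ('n, 'r::comm_ring_1) mpoly set \<Rightarrow> nat" where
  "mu S deg I = (LEAST d. I = ideal_gen S {p \<in> I. \<exists>e\<le>d. homogeneous deg e p})"

end

theory Submission
  imports Defs
begin

(* For each d, "any two factorizations of an element are joined by a chain of steps of graded
   distance at most d" and "ker pi_R is generated by homogeneous elements of degree at most d"
   are equivalent, so the least such d agree.

   Given such chains, split each step alpha -> gamma as alpha = g + u, gamma = g + v with
   g = gcd(alpha, gamma); then x^alpha - x^gamma = x^g (x^u - x^v), and x^u - x^v is a
   homogeneous kernel element of degree |u|_gr <= d. An element of the kernel is a combination
   of differences x^alpha - x^gamma with a^alpha = a^gamma, hence lies in the ideal generated in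
   degree at most d.

   Conversely, let C be the set of factorizations reachable from alpha by such steps. The
   functional "sum of the coefficients of the monomials in C" vanishes on every homogeneous
   kernel element of degree at most d: two of its monomials with the same image in S are one
   step apart, so each fibre of alpha |-> a^alpha on its support lies inside or outside C, and
   the fibre sums vanish. Translating C by a factorization keeps it closed under steps, so the
   functional vanishes on the whole ideal; applied to x^alpha - x^gamma it forces gamma into C. *)

abbreviation lookup :: "('a \<Rightarrow>\<^sub>0 'b::zero) \<Rightarrow> 'a \<Rightarrow> 'b" where
  "lookup \<equiv> Poly_Mapping.lookup"

abbreviation keys :: "('a \<Rightarrow>\<^sub>0 'b::zero) \<Rightarrow> 'a set" where
  "keys \<equiv> Poly_Mapping.keys"

abbreviation single :: "'a \<Rightarrow> 'b::zero \<Rightarrow> 'a \<Rightarrow>\<^sub>0 'b" where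
  "single \<equiv> Poly_Mapping.single"

lemma poly_mapping_sum_single: "p = (\<Sum>\<alpha>\<in>keys p. single \<alpha> (lookup p \<alpha>))"
  for p :: "'a \<Rightarrow>\<^sub>0 'b::comm_monoid_add"
  by (rule poly_mapping_eqI) (simp add: lookup_sum lookup_single when_def in_keys_iff)

lemma single_sum: "single k (sum f A) = (\<Sum>x\<in>A. single k (f x))"
  by (rule poly_mapping_eqI) (simp add: lookup_sum lookup_single when_def)

lemma times_poly_mapping_eq_sum:
  "p * q = (\<Sum>\<alpha>\<in>keys p. \<Sum>\<beta>\<in>keys q. single (\<alpha> + \<beta>) (lookup p \<alpha> * lookup q \<beta>))"
  for p q :: "'a::comm_monoid_add \<Rightarrow>\<^sub>0 'b::comm_semiring_1"
proof -
  have "p * q = (\<Sum>\<alpha>\<in>keys p. single \<alpha> (lookup p \<alpha>)) * (\<Sum>\<beta>\<in>keys q. single \<beta> (lookup q \<beta>))"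
    using poly_mapping_sum_single[of p] poly_mapping_sum_single[of q] by simp
  then show ?thesis
    by (simp only: sum_distrib_right) (simp only: sum_distrib_left mult_single)
qed

lemma atom_pow_add: "atom_pow (\<alpha> + \<beta>) = atom_pow \<alpha> + atom_pow \<beta>"
  unfolding atom_pow_def by (rule setsum_keys_plus_distrib) (auto simp: fun_eq_iff algebra_simps)

lemma gr_len_minus: "gr_len deg (\<alpha> - \<beta>) = gr_len_diff deg \<alpha> \<beta>"
  unfolding gr_len_def gr_len_diff_def
  by (rule sum.mono_neutral_cong_left) (auto simp: in_keys_iff lookup_minus)

lemma gr_len_minus_le: "gr_len deg (\<alpha> - \<beta>) \<le> gr_len deg \<alpha>"
proof -
  have "gr_len_diff deg \<alpha> \<beta> \<le> gr_len deg \<alpha>"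
    unfolding gr_len_diff_def gr_len_def by (rule sum_mono) simp
  then show ?thesis by (simp only: gr_len_minus)
qed

lemma d_gr_eq: "d_gr deg \<alpha> \<gamma> = max (gr_len deg (\<alpha> - \<gamma>)) (gr_len deg (\<gamma> - \<alpha>))"
  by (simp add: d_gr_def gr_len_minus)

lemma d_gr_le_gr_len: "d_gr deg \<alpha> \<gamma> \<le> max (gr_len deg \<alpha>) (gr_len deg \<gamma>)"
  unfolding d_gr_eq by (intro max.mono gr_len_minus_le)

lemma d_gr_add_right: "d_gr deg (\<alpha> + \<delta>) (\<gamma> + \<delta>) = d_gr deg \<alpha> \<gamma>"
  by (simp add: d_gr_eq)

lemma is_fact_zero [simp]: "is_fact S 0"
  by (simp add: is_fact_def)

lemma is_fact_add: "is_fact S \<alpha> \<Longrightarrow> is_fact S \<beta> \<Longrightarrow> is_fact S (\<alpha> + \<beta>)"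
  unfolding is_fact_def using keys_add[of \<alpha> \<beta>] by blast

lemma is_fact_minus: "is_fact S \<alpha> \<Longrightarrow> is_fact S (\<alpha> - \<beta>)"
  unfolding is_fact_def by (auto simp: in_keys_iff lookup_minus)

lemma graded_monoid_deg_zero: "mon_closed S \<Longrightarrow> graded_monoid S deg \<Longrightarrow> deg 0 = 0"
  unfolding mon_closed_def graded_monoid_def by (metis add_0 add_cancel_right_right)

lemma graded_monoid_sum:
  assumes "mon_closed S" "graded_monoid S deg" "\<And>x. x \<in> A \<Longrightarrow> f x \<in> S"
  shows "sum f A \<in> S \<and> deg (sum f A) = (\<Sum>x\<in>A. deg (f x))"
  using assms(3)
proof (induction A rule: infinite_finite_induct)
  case (insert x A)
  then have "f x \<in> S" "sum f A \<in> S" "deg (sum f A) = (\<Sum>x\<in>A. deg (f x))" by auto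
  with assms(1,2) show ?case
    unfolding sum.insert[OF insert.hyps] mon_closed_def graded_monoid_def by metis
qed (use assms(1,2) graded_monoid_deg_zero in \<open>auto simp: mon_closed_def\<close>)

lemma deg_atom_pow:
  assumes "mon_closed S" "graded_monoid S deg" "is_fact S \<alpha>"
  shows "deg (atom_pow \<alpha>) = gr_len deg \<alpha>"
proof -
  have atoms: "a \<in> S" if "a \<in> keys \<alpha>" for a
    using assms(3) that unfolding is_fact_def atoms_def by blast
  note graded_monoid_sum = graded_monoid_sum[OF assms(1,2)]
  have "(\<lambda>i. int k * a i) = (\<Sum>_<k. a)" for k and a :: "'a \<Rightarrow> int"
    by (simp add: fun_eq_iff)
  then have pow: "atom_pow \<alpha> = (\<Sum>a\<in>keys \<alpha>. \<Sum>_<lookup \<alpha> a. a)"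
    unfolding atom_pow_def by presburger
  have "deg (atom_pow \<alpha>) = (\<Sum>a\<in>keys \<alpha>. deg (\<Sum>_<lookup \<alpha> a. a))"
    unfolding pow
    by (intro graded_monoid_sum[THEN conjunct2] graded_monoid_sum[THEN conjunct1] atoms)
  also have "\<dots> = (\<Sum>a\<in>keys \<alpha>. lookup \<alpha> a * deg a)"
  proof (intro sum.cong refl)
    fix a assume "a \<in> keys \<alpha>"
    then show "deg (\<Sum>_<lookup \<alpha> a. a) = lookup \<alpha> a * deg a"
      using graded_monoid_sum[THEN conjunct2, of "{..<lookup \<alpha> a}" "\<lambda>_. a"] atoms by simp
  qed
  finally show ?thesis unfolding gr_len_def .
qed

lemma gr_len_eq_if_atom_pow_eq:
  assumes "mon_closed S" "graded_monoid S deg" "is_fact S \<alpha>" "is_fact S \<gamma>"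
    and "atom_pow \<alpha> = atom_pow \<gamma>"
  shows "gr_len deg \<alpha> = gr_len deg \<gamma>"
  using deg_atom_pow[OF assms(1,2)] assms(3-5) by metis

lemma rtranclp_iff_successively:
  "r\<^sup>*\<^sup>* x y \<longleftrightarrow> (\<exists>xs. xs \<noteq> [] \<and> hd xs = x \<and> last xs = y \<and> successively r xs)"
proof
  show "r\<^sup>*\<^sup>* x y \<Longrightarrow> \<exists>xs. xs \<noteq> [] \<and> hd xs = x \<and> last xs = y \<and> successively r xs"
  proof (induction rule: converse_rtranclp_induct)
    case base
    show ?case by (intro exI[of _ "[y]"]) simp
  next
    case (step x z)
    then obtain xs where "xs \<noteq> []" "hd xs = z" "last xs = y" "successively r xs" by blast
    with step.hyps(1) show ?case by (intro exI[of _ "x # xs"]) (simp add: successively_Cons)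
  qed
  have "successively r xs \<Longrightarrow> xs \<noteq> [] \<Longrightarrow> r\<^sup>*\<^sup>* (hd xs) (last xs)" for xs
    by (induction xs) (auto simp: successively_Cons intro: converse_rtranclp_into_rtranclp)
  then show "\<exists>xs. xs \<noteq> [] \<and> hd xs = x \<and> last xs = y \<and> successively r xs \<Longrightarrow> r\<^sup>*\<^sup>* x y"
    by fastforce
qed

definition chain_step ::
  "('n \<Rightarrow> int) set \<Rightarrow> (('n \<Rightarrow> int) \<Rightarrow> nat) \<Rightarrow> nat \<Rightarrow>
    (('n \<Rightarrow> int) \<Rightarrow>\<^sub>0 nat) \<Rightarrow> (('n \<Rightarrow> int) \<Rightarrow>\<^sub>0 nat) \<Rightarrow> bool" where
  "chain_step S deg d \<alpha> \<gamma> \<longleftrightarrow>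
     is_fact S \<alpha> \<and> is_fact S \<gamma> \<and> atom_pow \<alpha> = atom_pow \<gamma> \<and> d_gr deg \<alpha> \<gamma> \<le> d"

lemma chain_step_sym: "chain_step S deg d \<alpha> \<gamma> \<Longrightarrow> chain_step S deg d \<gamma> \<alpha>"
  unfolding chain_step_def d_gr_def by (simp add: max.commute)

lemma chain_step_add_left:
  "chain_step S deg d \<alpha> \<gamma> \<Longrightarrow> is_fact S \<delta> \<Longrightarrow> chain_step S deg d (\<delta> + \<alpha>) (\<delta> + \<gamma>)"
  unfolding chain_step_def
  by (simp add: is_fact_add atom_pow_add add.commute[of \<delta>] d_gr_add_right)

lemma successively_chain_step_is_fact:
  assumes "successively (chain_step S deg d) cs" "is_fact S (hd cs)"
  shows "\<forall>\<beta>\<in>set cs. is_fact S \<beta>"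
  using assms
proof (induction cs)
  case (Cons \<beta> cs)
  show ?case
  proof (cases "cs = []")
    case False
    with Cons.prems have "chain_step S deg d \<beta> (hd cs)" "successively (chain_step S deg d) cs"
      by (simp_all add: successively_Cons)
    with Cons.IH Cons.prems(2) show ?thesis unfolding chain_step_def by simp
  qed (use Cons.prems in simp)
qed simp

lemma cgr_bound_iff_rtranclp:
  "cgr_bound S deg d \<longleftrightarrow>
     (\<forall>\<alpha> \<gamma>. is_fact S \<alpha> \<longrightarrow> is_fact S \<gamma> \<longrightarrow> atom_pow \<alpha> = atom_pow \<gamma> \<longrightarrow>
        (chain_step S deg d)\<^sup>*\<^sup>* \<alpha> \<gamma>)"
proof -
  have steps: "(\<forall>j. Suc j < length cs \<longrightarrow>
        atom_pow (cs ! j) = atom_pow (cs ! Suc j) \<and> d_gr deg (cs ! j) (cs ! Suc j) \<le> d)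
      \<longleftrightarrow> successively (chain_step S deg d) cs" if "\<forall>\<beta>\<in>set cs. is_fact S \<beta>" for cs
  proof -
    have "(\<forall>j. Suc j < length cs \<longrightarrow>
        atom_pow (cs ! j) = atom_pow (cs ! Suc j) \<and> d_gr deg (cs ! j) (cs ! Suc j) \<le> d)
      \<longleftrightarrow> successively (\<lambda>\<beta> \<beta>'. atom_pow \<beta> = atom_pow \<beta>' \<and> d_gr deg \<beta> \<beta>' \<le> d) cs"
      by (simp add: successively_conv_nth)
    also have "\<dots> \<longleftrightarrow> successively (chain_step S deg d) cs"
      using that by (intro successively_cong) (auto simp: chain_step_def)
    finally show ?thesis .
  qed
  have chains: "(\<exists>cs. cs \<noteq> [] \<and> hd cs = \<alpha> \<and> last cs = \<gamma> \<and> (\<forall>\<beta>\<in>set cs. is_fact S \<beta>) \<and>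
        (\<forall>j. Suc j < length cs \<longrightarrow>
          atom_pow (cs ! j) = atom_pow (cs ! Suc j) \<and> d_gr deg (cs ! j) (cs ! Suc j) \<le> d))
      \<longleftrightarrow> (\<exists>cs. cs \<noteq> [] \<and> hd cs = \<alpha> \<and> last cs = \<gamma> \<and> successively (chain_step S deg d) cs)"
    if "is_fact S \<alpha>" for \<alpha> \<gamma>
    using that steps successively_chain_step_is_fact by metis
  show ?thesis
    unfolding cgr_bound_def rtranclp_iff_successively by (auto simp: chains)
qed

lemma pi_R_add: "pi_R (p + q) = pi_R p + pi_R q"
  unfolding pi_R_def by (rule setsum_keys_plus_distrib) (simp_all add: single_add)

lemma pi_R_zero [simp]: "pi_R 0 = 0"
  by (simp add: pi_R_def)

lemma pi_R_diff: "pi_R (p - q) = pi_R p - pi_R q"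
  for p q :: "('n, 'r::comm_ring_1) mpoly"
  using pi_R_add[of "p - q" q] by (simp add: eq_diff_eq)

lemma pi_R_sum: "pi_R (sum f A) = (\<Sum>x\<in>A. pi_R (f x))"
  by (induction A rule: infinite_finite_induct) (simp_all add: pi_R_add)

lemma pi_R_single: "pi_R (single \<alpha> c) = single (atom_pow \<alpha>) c"
  by (cases "c = 0") (simp_all add: pi_R_def)

lemma pi_R_mult: "pi_R (p * q) = pi_R p * pi_R q"
  for p q :: "('n, 'r::comm_ring_1) mpoly"
proof -
  have "pi_R (p * q) =
      (\<Sum>\<alpha>\<in>keys p. \<Sum>\<beta>\<in>keys q. single (atom_pow \<alpha> + atom_pow \<beta>) (lookup p \<alpha> * lookup q \<beta>))"
    by (subst times_poly_mapping_eq_sum) (simp add: pi_R_sum pi_R_single atom_pow_add)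
  also have "\<dots> = pi_R p * pi_R q"
    unfolding pi_R_def by (simp only: sum_distrib_right) (simp only: sum_distrib_left mult_single)
  finally show ?thesis .
qed

lemma lookup_pi_R: "lookup (pi_R p) s = (\<Sum>\<alpha>\<in>{\<alpha>\<in>keys p. atom_pow \<alpha> = s}. lookup p \<alpha>)"
  unfolding pi_R_def by (simp add: lookup_sum lookup_single when_def sum.inter_filter eq_commute)

lemma sum_single_comp_atom_pow:
  "(\<Sum>\<alpha>\<in>keys p. single (f (atom_pow \<alpha>)) (lookup p \<alpha>)) =
     (\<Sum>s\<in>atom_pow ` keys p. single (f s) (lookup (pi_R p) s))"
  by (subst sum.image_gen[where g = atom_pow]) (simp_all add: lookup_pi_R single_sum)

lemma poly_ring_zero: "0 \<in> poly_ring S"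
  by (simp add: poly_ring_def)

lemma poly_ring_single: "is_fact S \<alpha> \<Longrightarrow> single \<alpha> c \<in> poly_ring S"
  by (simp add: poly_ring_def)

lemma poly_ring_add: "p \<in> poly_ring S \<Longrightarrow> q \<in> poly_ring S \<Longrightarrow> p + q \<in> poly_ring S"
  unfolding poly_ring_def using keys_add[of p q] by blast

lemma poly_ring_diff: "p \<in> poly_ring S \<Longrightarrow> q \<in> poly_ring S \<Longrightarrow> p - q \<in> poly_ring S"
  for p q :: "('n, 'r::comm_ring_1) mpoly"
  unfolding poly_ring_def using keys_diff[of p q] by blast

lemma poly_ring_mult: "p \<in> poly_ring S \<Longrightarrow> q \<in> poly_ring S \<Longrightarrow> p * q \<in> poly_ring S"
  for p q :: "('n, 'r::comm_ring_1) mpoly"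
  unfolding poly_ring_def using keys_mult[of p q] is_fact_add by blast

lemma poly_ring_sum: "(\<And>x. x \<in> A \<Longrightarrow> f x \<in> poly_ring S) \<Longrightarrow> sum f A \<in> poly_ring S"
  by (induction A rule: infinite_finite_induct) (simp_all add: poly_ring_zero poly_ring_add)

lemma mem_ideal_gen_iff:
  "x \<in> ideal_gen S G \<longleftrightarrow>
     (\<exists>H c. x = (\<Sum>g\<in>H. c g * g) \<and> finite H \<and> H \<subseteq> G \<and> (\<forall>g\<in>H. c g \<in> poly_ring S))"
  unfolding ideal_gen_def by blast

lemma ideal_gen_zero: "0 \<in> ideal_gen S G"
  unfolding mem_ideal_gen_iff by (intro exI[of _ "{}"]) simp

lemma ideal_gen_generator: "g \<in> G \<Longrightarrow> r \<in> poly_ring S \<Longrightarrow> r * g \<in> ideal_gen S G"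
  unfolding mem_ideal_gen_iff by (intro exI[of _ "{g}"] exI[of _ "\<lambda>_. r"]) simp

lemma ideal_gen_add:
  assumes "x \<in> ideal_gen S G" "y \<in> ideal_gen S G"
  shows "x + y \<in> ideal_gen S G"
proof -
  obtain H c where x: "x = (\<Sum>g\<in>H. c g * g)" "finite H" "H \<subseteq> G" "\<forall>g\<in>H. c g \<in> poly_ring S"
    using assms(1) unfolding mem_ideal_gen_iff by blast
  obtain H' c' where y: "y = (\<Sum>g\<in>H'. c' g * g)" "finite H'" "H' \<subseteq> G" "\<forall>g\<in>H'. c' g \<in> poly_ring S"
    using assms(2) unfolding mem_ideal_gen_iff by blast
  define b where "b g = (if g \<in> H then c g else 0) + (if g \<in> H' then c' g else 0)" for g
  have "x = (\<Sum>g\<in>H \<union> H'. (if g \<in> H then c g else 0) * g)"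
    unfolding x(1) using x(2) y(2) by (intro sum.mono_neutral_cong_left) auto
  moreover have "y = (\<Sum>g\<in>H \<union> H'. (if g \<in> H' then c' g else 0) * g)"
    unfolding y(1) using x(2) y(2) by (intro sum.mono_neutral_cong_left) auto
  ultimately have "x + y = (\<Sum>g\<in>H \<union> H'. b g * g)"
    unfolding b_def distrib_right sum.distrib by (simp only:)
  moreover have "\<forall>g\<in>H \<union> H'. b g \<in> poly_ring S"
    using x(4) y(4) by (simp add: b_def poly_ring_add poly_ring_zero)
  ultimately show ?thesis
    unfolding mem_ideal_gen_iff using x(2,3) y(2,3) by blast
qed

lemma ideal_gen_mult:
  assumes "r \<in> poly_ring S" "x \<in> ideal_gen S G"
  shows "r * x \<in> ideal_gen S G"
proof -
  obtain H c where x: "x = (\<Sum>g\<in>H. c g * g)" "finite H" "H \<subseteq> G" "\<forall>g\<in>H. c g \<in> poly_ring S"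
    using assms(2) unfolding mem_ideal_gen_iff by blast
  have "r * x = (\<Sum>g\<in>H. (r * c g) * g)"
    unfolding x(1) by (simp add: sum_distrib_left mult.assoc)
  moreover have "\<forall>g\<in>H. r * c g \<in> poly_ring S"
    using x(4) assms(1) poly_ring_mult by blast
  ultimately show ?thesis
    unfolding mem_ideal_gen_iff using x(2,3) by (intro exI[of _ H] exI[of _ "\<lambda>g. r * c g"]) simp
qed

lemma ideal_gen_sum: "(\<And>x. x \<in> A \<Longrightarrow> f x \<in> ideal_gen S G) \<Longrightarrow> sum f A \<in> ideal_gen S G"
  by (induction A rule: infinite_finite_induct) (simp_all add: ideal_gen_zero ideal_gen_add)

lemma ideal_gen_subset_ker_pi:
  assumes "G \<subseteq> ker_pi S"
  shows "ideal_gen S G \<subseteq> ker_pi S"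
proof
  fix x assume "x \<in> ideal_gen S G"
  then obtain H c where x: "x = (\<Sum>g\<in>H. c g * g)" "H \<subseteq> G" "\<forall>g\<in>H. c g \<in> poly_ring S"
    unfolding mem_ideal_gen_iff by blast
  with assms have "\<forall>g\<in>H. g \<in> poly_ring S \<and> pi_R g = 0"
    unfolding ker_pi_def by blast
  with x show "x \<in> ker_pi S"
    unfolding ker_pi_def by (simp add: pi_R_sum pi_R_mult poly_ring_sum poly_ring_mult)
qed

definition ker_upto ::
  "('n \<Rightarrow> int) set \<Rightarrow> (('n \<Rightarrow> int) \<Rightarrow> nat) \<Rightarrow> nat \<Rightarrow> ('n, 'r::comm_ring_1) mpoly set" where
  "ker_upto S deg d = {p \<in> ker_pi S. \<exists>e\<le>d. homogeneous deg e p}"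

lemma binomial_mem_ideal_gen:
  assumes "mon_closed S" "graded_monoid S deg" "chain_step S deg d \<beta> \<beta>'"
  shows "single \<beta> 1 - single \<beta>' 1 \<in> ideal_gen S (ker_upto S deg d :: ('n, 'r::comm_ring_1) mpoly set)"
proof -
  have facts: "is_fact S \<beta>" "is_fact S \<beta>'" and pow: "atom_pow \<beta> = atom_pow \<beta>'"
    and dist: "d_gr deg \<beta> \<beta>' \<le> d"
    using assms(3) unfolding chain_step_def by auto
  define u where "u = \<beta> - \<beta>'"
  define v where "v = \<beta>' - \<beta>"
  define g where "g = \<beta> - u" \<comment> \<open>the pointwise minimum of \<beta> and \<beta>'\<close>
  have decomp: "\<beta> = g + u" "\<beta>' = g + v"
    by (simp_all add: poly_mapping_eqI lookup_add lookup_minus g_def u_def v_def)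
  have fuv: "is_fact S u" "is_fact S v" "is_fact S g"
    unfolding u_def v_def g_def using facts by (simp_all add: is_fact_minus)
  have "atom_pow g + atom_pow u = atom_pow g + atom_pow v"
    using pow unfolding decomp atom_pow_add .
  then have "atom_pow u = atom_pow v" by simp
  then have len: "gr_len deg v = gr_len deg u"
    using gr_len_eq_if_atom_pow_eq[OF assms(1,2)] fuv by metis
  define b :: "('n, 'r) mpoly" where "b = single u 1 - single v 1"
  have "b \<in> poly_ring S" "pi_R b = 0"
    unfolding b_def using fuv \<open>atom_pow u = atom_pow v\<close>
    by (simp_all add: poly_ring_diff poly_ring_single pi_R_diff pi_R_single)
  moreover have "homogeneous deg (gr_len deg u) b"
    unfolding homogeneous_def b_def using keys_diff len by fastforce
  moreover have "gr_len deg u \<le> d"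
    using dist unfolding d_gr_eq u_def by simp
  ultimately have "b \<in> ker_upto S deg d"
    unfolding ker_upto_def ker_pi_def by blast
  moreover have "single \<beta> 1 - single \<beta>' 1 = single g 1 * b"
    unfolding b_def decomp by (simp add: right_diff_distrib mult_single)
  ultimately show ?thesis
    using ideal_gen_generator poly_ring_single[OF fuv(3)] by metis
qed

lemma binomial_mem_ideal_gen_if_rtranclp:
  assumes "mon_closed S" "graded_monoid S deg" "(chain_step S deg d)\<^sup>*\<^sup>* \<beta> \<beta>'"
  shows "single \<beta> 1 - single \<beta>' 1 \<in> ideal_gen S (ker_upto S deg d :: ('n, 'r::comm_ring_1) mpoly set)"
  using assms(3)
proof (induction rule: rtranclp_induct)
  case (step \<gamma> \<gamma>')
  have "single \<beta> 1 - single \<gamma>' 1 =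
      (single \<beta> 1 - single \<gamma> 1) + (single \<gamma> 1 - single \<gamma>' (1::'r))"
    by simp
  then show ?case
    using ideal_gen_add[OF step.IH binomial_mem_ideal_gen[OF assms(1,2) step.hyps(2)]] by simp
qed (simp add: ideal_gen_zero)

lemma ker_pi_subset_ideal_gen_if_cgr_bound:
  assumes "mon_closed S" "graded_monoid S deg" "cgr_bound S deg d"
  shows "ker_pi S \<subseteq> (ideal_gen S (ker_upto S deg d) :: ('n, 'r::comm_ring_1) mpoly set)"
proof
  fix p :: "('n, 'r) mpoly"
  assume p: "p \<in> ker_pi S"
  then have facts: "is_fact S \<alpha>" if "\<alpha> \<in> keys p" for \<alpha>
    using that unfolding ker_pi_def poly_ring_def by auto
  from p have "pi_R p = 0"
    unfolding ker_pi_def by simp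
  define rep where "rep s = (SOME \<alpha>. \<alpha> \<in> keys p \<and> atom_pow \<alpha> = s)" for s
  have rep: "rep (atom_pow \<alpha>) \<in> keys p \<and> atom_pow (rep (atom_pow \<alpha>)) = atom_pow \<alpha>"
    if "\<alpha> \<in> keys p" for \<alpha>
    unfolding rep_def using that by (rule someI[of _ \<alpha>, OF conjI[OF _ refl]])
  have "(\<Sum>\<alpha>\<in>keys p. single (rep (atom_pow \<alpha>)) (lookup p \<alpha>)) = 0"
    unfolding sum_single_comp_atom_pow \<open>pi_R p = 0\<close> by simp
  then have "p = (\<Sum>\<alpha>\<in>keys p. single 0 (lookup p \<alpha>) * (single \<alpha> 1 - single (rep (atom_pow \<alpha>)) 1))"
    by (subst (1) poly_mapping_sum_single)
      (simp add: mult_single right_diff_distrib sum_subtractf)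
  also have "\<dots> \<in> ideal_gen S (ker_upto S deg d)"
  proof (intro ideal_gen_sum ideal_gen_mult)
    fix \<alpha> assume "\<alpha> \<in> keys p"
    show "single 0 (lookup p \<alpha>) \<in> poly_ring S"
      by (simp add: poly_ring_single)
    have "(chain_step S deg d)\<^sup>*\<^sup>* \<alpha> (rep (atom_pow \<alpha>))"
      using assms(3) facts rep \<open>\<alpha> \<in> keys p\<close> unfolding cgr_bound_iff_rtranclp by metis
    then show "single \<alpha> 1 - single (rep (atom_pow \<alpha>)) 1 \<in> ideal_gen S (ker_upto S deg d)"
      by (rule binomial_mem_ideal_gen_if_rtranclp[OF assms(1,2)])
  qed
  finally show "p \<in> ideal_gen S (ker_upto S deg d)" .
qed

definition coeff_sum :: "'a set \<Rightarrow> ('a \<Rightarrow>\<^sub>0 'b::comm_monoid_add) \<Rightarrow> 'b" where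
  "coeff_sum C p = (\<Sum>\<alpha>\<in>keys p. if \<alpha> \<in> C then lookup p \<alpha> else 0)"

lemma coeff_sum_add: "coeff_sum C (p + q) = coeff_sum C p + coeff_sum C q"
  unfolding coeff_sum_def by (rule setsum_keys_plus_distrib) simp_all

lemma coeff_sum_zero [simp]: "coeff_sum C 0 = 0"
  by (simp add: coeff_sum_def)

lemma coeff_sum_diff: "coeff_sum C (p - q) = coeff_sum C p - coeff_sum C q"
  for p q :: "'a \<Rightarrow>\<^sub>0 'b::ab_group_add"
  using coeff_sum_add[of C "p - q" q] by (simp add: eq_diff_eq)

lemma coeff_sum_sum: "coeff_sum C (sum f A) = (\<Sum>x\<in>A. coeff_sum C (f x))"
  by (induction A rule: infinite_finite_induct) (simp_all add: coeff_sum_add)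

lemma coeff_sum_single: "coeff_sum C (single \<alpha> c) = (if \<alpha> \<in> C then c else 0)"
  by (cases "c = 0") (simp_all add: coeff_sum_def)

lemma coeff_sum_mult:
  "coeff_sum C (r * q) = (\<Sum>\<delta>\<in>keys r. lookup r \<delta> * coeff_sum {\<beta>. \<delta> + \<beta> \<in> C} q)"
  for r q :: "'a::comm_monoid_add \<Rightarrow>\<^sub>0 'b::comm_semiring_1"
proof -
  have "coeff_sum C (r * q) =
      (\<Sum>\<delta>\<in>keys r. \<Sum>\<beta>\<in>keys q. if \<delta> + \<beta> \<in> C then lookup r \<delta> * lookup q \<beta> else 0)"
    by (subst times_poly_mapping_eq_sum) (simp add: coeff_sum_sum coeff_sum_single)
  also have "\<dots> = (\<Sum>\<delta>\<in>keys r. lookup r \<delta> * coeff_sum {\<beta>. \<delta> + \<beta> \<in> C} q)"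
    unfolding coeff_sum_def sum_distrib_left by (intro sum.cong) simp_all
  finally show ?thesis .
qed

definition saturated ::
  "('n \<Rightarrow> int) set \<Rightarrow> (('n \<Rightarrow> int) \<Rightarrow> nat) \<Rightarrow> nat \<Rightarrow> (('n \<Rightarrow> int) \<Rightarrow>\<^sub>0 nat) set \<Rightarrow> bool" where
  "saturated S deg d C \<longleftrightarrow> (\<forall>\<alpha> \<gamma>. chain_step S deg d \<alpha> \<gamma> \<longrightarrow> (\<alpha> \<in> C \<longleftrightarrow> \<gamma> \<in> C))"

lemma saturated_translate:
  "is_fact S \<delta> \<Longrightarrow> saturated S deg d C \<Longrightarrow> saturated S deg d {\<beta>. \<delta> + \<beta> \<in> C}"
  unfolding saturated_def using chain_step_add_left by blast

lemma coeff_sum_eq_0_if_mem_ker_upto: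
  assumes "q \<in> ker_upto S deg d" "saturated S deg d C"
  shows "coeff_sum C q = 0"
proof -
  obtain e where "q \<in> poly_ring S" "pi_R q = 0" "e \<le> d" "homogeneous deg e q"
    using assms(1) unfolding ker_upto_def ker_pi_def by blast
  have step: "chain_step S deg d \<alpha> \<gamma>"
    if "\<alpha> \<in> keys q" "\<gamma> \<in> keys q" "atom_pow \<alpha> = atom_pow \<gamma>" for \<alpha> \<gamma>
  proof -
    have "gr_len deg \<alpha> = e" "gr_len deg \<gamma> = e"
      using \<open>homogeneous deg e q\<close> that unfolding homogeneous_def by auto
    then have "d_gr deg \<alpha> \<gamma> \<le> d"
      using d_gr_le_gr_len[of deg \<alpha> \<gamma>] \<open>e \<le> d\<close> by simp
    moreover have "is_fact S \<alpha>" "is_fact S \<gamma>"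
      using \<open>q \<in> poly_ring S\<close> that unfolding poly_ring_def by auto
    ultimately show ?thesis
      unfolding chain_step_def using that(3) by simp
  qed
  let ?A = "keys q \<inter> C"
  have "coeff_sum C q = (\<Sum>\<alpha>\<in>?A. lookup q \<alpha>)"
    unfolding coeff_sum_def by (simp add: sum.inter_restrict)
  also have "\<dots> = (\<Sum>s\<in>atom_pow ` ?A. \<Sum>\<alpha>\<in>{\<alpha>\<in>?A. atom_pow \<alpha> = s}. lookup q \<alpha>)"
    by (rule sum.image_gen) simp
  also have "\<dots> = (\<Sum>s\<in>atom_pow ` ?A. lookup (pi_R q) s)"
  proof (rule sum.cong[OF refl])
    fix s assume "s \<in> atom_pow ` ?A"
    then obtain \<alpha>\<^sub>0 where "\<alpha>\<^sub>0 \<in> keys q" "\<alpha>\<^sub>0 \<in> C" "s = atom_pow \<alpha>\<^sub>0" by blast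
    then have "\<alpha> \<in> C" if "\<alpha> \<in> keys q" "atom_pow \<alpha> = s" for \<alpha>
      using step[of \<alpha>\<^sub>0 \<alpha>] that assms(2) unfolding saturated_def by simp
    then have "{\<alpha>\<in>?A. atom_pow \<alpha> = s} = {\<alpha>\<in>keys q. atom_pow \<alpha> = s}"
      by blast
    then show "(\<Sum>\<alpha>\<in>{\<alpha>\<in>?A. atom_pow \<alpha> = s}. lookup q \<alpha>) = lookup (pi_R q) s"
      by (simp add: lookup_pi_R)
  qed
  also have "\<dots> = 0"
    using \<open>pi_R q = 0\<close> by simp
  finally show ?thesis .
qed

lemma coeff_sum_eq_0_if_mem_ideal_gen:
  assumes "x \<in> ideal_gen S (ker_upto S deg d)" "saturated S deg d C"
  shows "coeff_sum C x = 0"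
proof -
  obtain H c where x: "x = (\<Sum>g\<in>H. c g * g)" "H \<subseteq> ker_upto S deg d" "\<forall>g\<in>H. c g \<in> poly_ring S"
    using assms(1) unfolding mem_ideal_gen_iff by blast
  have "coeff_sum {\<beta>. \<delta> + \<beta> \<in> C} g = 0" if "g \<in> H" "\<delta> \<in> keys (c g)" for g \<delta>
  proof (rule coeff_sum_eq_0_if_mem_ker_upto)
    show "g \<in> ker_upto S deg d" using x(2) that(1) by blast
    have "is_fact S \<delta>" using x(3) that unfolding poly_ring_def by blast
    then show "saturated S deg d {\<beta>. \<delta> + \<beta> \<in> C}" using assms(2) by (rule saturated_translate)
  qed
  then show ?thesis
    unfolding x(1) coeff_sum_sum coeff_sum_mult by simp
qed

lemma cgr_bound_if_ker_pi_subset_ideal_gen: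
  assumes "(1::'r::comm_ring_1) \<noteq> 0"
    and "ker_pi S \<subseteq> (ideal_gen S (ker_upto S deg d) :: ('n, 'r) mpoly set)"
  shows "cgr_bound S deg d"
  unfolding cgr_bound_iff_rtranclp
proof (intro allI impI)
  fix \<alpha> \<gamma> assume "is_fact S \<alpha>" "is_fact S \<gamma>" "atom_pow \<alpha> = atom_pow \<gamma>"
  then have "single \<alpha> 1 - single \<gamma> (1::'r) \<in> ker_pi S"
    unfolding ker_pi_def by (simp add: poly_ring_diff poly_ring_single pi_R_diff pi_R_single)
  then have "single \<alpha> 1 - single \<gamma> (1::'r) \<in> ideal_gen S (ker_upto S deg d)"
    using assms(2) by blast
  define C where "C = {\<beta>. (chain_step S deg d)\<^sup>*\<^sup>* \<alpha> \<beta>}"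
  have "saturated S deg d C"
    unfolding saturated_def C_def mem_Collect_eq
  proof (intro allI impI)
    fix \<beta> \<beta>' assume "chain_step S deg d \<beta> \<beta>'"
    then show "(chain_step S deg d)\<^sup>*\<^sup>* \<alpha> \<beta> \<longleftrightarrow> (chain_step S deg d)\<^sup>*\<^sup>* \<alpha> \<beta>'"
      using chain_step_sym rtranclp.rtrancl_into_rtrancl by metis
  qed
  with \<open>single \<alpha> 1 - single \<gamma> 1 \<in> ideal_gen S (ker_upto S deg d)\<close>
  have "coeff_sum C (single \<alpha> 1 - single \<gamma> (1::'r)) = 0"
    by (rule coeff_sum_eq_0_if_mem_ideal_gen)
  then have "\<gamma> \<in> C"
    using assms(1) by (simp add: coeff_sum_diff coeff_sum_single C_def split: if_splits)
  then show "(chain_step S deg d)\<^sup>*\<^sup>* \<alpha> \<gamma>"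
    unfolding C_def by simp
qed

lemma cgr_bound_iff_ker_pi_eq_ideal_gen:
  assumes "mon_closed S" "graded_monoid S deg" "(1::'r::comm_ring_1) \<noteq> 0"
  shows "cgr_bound S deg d \<longleftrightarrow> (ker_pi S :: ('n, 'r) mpoly set) = ideal_gen S (ker_upto S deg d)"
proof
  assume "cgr_bound S deg d"
  with assms(1,2) show "(ker_pi S :: ('n, 'r) mpoly set) = ideal_gen S (ker_upto S deg d)"
    by (intro equalityI ker_pi_subset_ideal_gen_if_cgr_bound ideal_gen_subset_ker_pi)
      (auto simp: ker_upto_def)
next
  assume "(ker_pi S :: ('n, 'r) mpoly set) = ideal_gen S (ker_upto S deg d)"
  then show "cgr_bound S deg d"
    by (intro cgr_bound_if_ker_pi_subset_ideal_gen[OF assms(3)]) simp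
qed

theorem corollary3p3:
  fixes S :: "('n::finite \<Rightarrow> int) set" and deg :: "('n \<Rightarrow> int) \<Rightarrow> nat"
  assumes "affine_monoid S" and "reduced_monoid S" and "connected_graded S deg"
    and "(1::'r::comm_ring_1) \<noteq> 0"
  shows "c_gr S deg = mu S deg (ker_pi S :: ('n, 'r) mpoly set)"
proof -
  have "mon_closed S" "graded_monoid S deg"
    using assms(1,3) unfolding affine_monoid_def connected_graded_def by simp_all
  note bound_iff = cgr_bound_iff_ker_pi_eq_ideal_gen[OF this assms(4)]
  show ?thesis
    unfolding c_gr_def mu_def bound_iff ker_upto_def ..
qed

end
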